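(* Let $\mathcal{C}$ be a category. Natural weak factorisation systems on $\mathcal{C}$ are in bijection with bialgebras in the strict 2-fold monoidal category $(\mathbf{Ff}_{\mathcal{C}},\otimes,I,\odot,\bot)$ described below.
   Context: $\mathcal{C}^{\mathbf 2}$ is the arrow category (objects: morphisms $f\colon X\to Y$; morphisms $(h,k)\colon f\to g$: commuting squares $gh=kf$). A functorial factorisation $(E,\lambda,\rho)$ is a functor $E\colon\mathcal{C}^{\mathbf 2}\to\mathcal{C}$ with natural $\lambda\colon\mathrm{dom}\Rightarrow E$, $\rho\colon E\Rightarrow\mathrm{cod}$, $\rho_f\lambda_f=f$. $\mathbf{Ff}_{\mathcal{C}}$ has these as objects and as morphisms natural $\alpha\colon E\Rightarrow E'$ with $\alpha\lambda=\lambda'$, $\rho'\alpha=\rho$. Monoidal structures: $(E',\lambda',\rho')\otimes(E,\lambda,\rho)$ factorises $f$ as $X\xrightarrow{\lambda'_{\rho_f}\lambda_f}E'(\rho_f)\xrightarrow{\rho'_{\rho_f}}Y$, unit $I=(\mathrm{dom},1,\kappa)$ (initial); $(E',\lambda',\rho')\odot(E,\lambda,\rho)$ factorises $f$ as $X\xrightarrow{\lambda'_{\lambda_f}}E'(\lambda_f)\xrightarrow{\rho_f\rho'_{\lambda_f}}Y$, unit $\bot=(\mathrm{cod},\kappa,1)$ (terminal); on morphisms $(\beta\otimes\alpha)_f=\beta_{\nu_f}E'(\alpha_f,1_Y)$, $(\beta\odot\alpha)_f=\beta_{\mu_f}E'(1_X,\alpha_f)$ for $\alpha\colon(E,\lambda,\rho)\to(F,\mu,\nu)$,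 $\beta\colon(E',\ldots)\to(F',\mu',\nu')$. The 2-fold structure: $m,c,j$ are the unique maps (from the initial / to the terminal object), and for $A=(E^1,\lambda^1,\rho^1)$, $B=(E^2,\ldots)$, $C=(E^3,\ldots)$, $D=(E^4,\ldots)$ the component at $f\colon X\to Y$ of $z_{A,B,C,D}\colon(A\odot B)\otimes(C\odot D)\to(A\otimes C)\odot(B\otimes D)$ is $E^1\big(E^3(1_X,\lambda^2_{\rho^4_f}),\,E^2(\rho^3_{\lambda^4_f},1_Y)\big)$. A bialgebra is $(A,\eta,\mu,\epsilon,\Delta)$ with $(A,\eta,\mu)$ a $\otimes$-monoid, $(A,\epsilon,\Delta)$ a $\odot$-comonoid, such that $\Delta\eta=(\eta\odot\eta)c$, $\epsilon\mu=m(\epsilon\otimes\epsilon)$, $\epsilon\eta=j$ and $\Delta\mu=(\mu\odot\mu)\,z_{A,A,A,A}\,(\Delta\otimes\Delta)$. A natural weak factorisation system (n.w.f.s.) on $\mathcal{C}$ is a functorial factorisation $(E,\lambda,\rho)$ together with natural families $\sigma_f\colon Ef\to E(\lambda_f)$ and $\pi_f\colon E(\rho_f)\to Ef$ (natural in $f$, where $L,R\colon\mathcal{C}^{\mathbf 2}\to\mathcal{C}^{\mathbf 2}$ send $f$ to $\lambda_f$, $\rho_f$) satisfying $\sigma_f\lambda_f=\lambda_{\lambda_f}$, $\rho_f\pi_f=\rho_{\rho_f}$, $\rho_{\lambda_f}\sigma_f=1$, $\pi_f\lambda_{\rho_f}=1$, $E(1_X,\rho_f)\sigma_f=1$, $\pi_fE(\lambda_f,1_Y)=1$,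 $E(1_X,\sigma_f)\sigma_f=\sigma_{\lambda_f}\sigma_f$, $\pi_fE(\pi_f,1_Y)=\pi_f\pi_{\rho_f}$, and $\sigma_f\pi_f=\pi_{\lambda_f}E(\sigma_f,\pi_f)\sigma_{\rho_f}$ (equivalently: a comonad $\mathsf L$ on $\mathcal{C}^{\mathbf 2}$ over $\mathrm{dom}$ with underlying functor $L$, a monad $\mathsf R$ over $\mathrm{cod}$ with underlying functor $R$, and a distributive law $LR\Rightarrow RL$). *)

theory Defs
  imports "HOL-Library.FuncSet"
begin

record ('o, 'a) cat =
  Ob    :: "'o set"
  Ar    :: "'a set"
  cdom  :: "'a \<Rightarrow> 'o"
  ccod  :: "'a \<Rightarrow> 'o"
  cid   :: "'o \<Rightarrow> 'a"
  ccomp :: "'a \<Rightarrow> 'a \<Rightarrow> 'a"   (* ccomp C g f = g o f *)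

definition hom :: "('o, 'a) cat \<Rightarrow> 'o \<Rightarrow> 'o \<Rightarrow> 'a set" where
  "hom C x y = {f \<in> Ar C. cdom C f = x \<and> ccod C f = y}"

definition category :: "('o, 'a) cat \<Rightarrow> bool" where
  "category C \<longleftrightarrow>
     (\<forall>f\<in>Ar C. cdom C f \<in> Ob C \<and> ccod C f \<in> Ob C) \<and>
     (\<forall>x\<in>Ob C. cid C x \<in> hom C x x) \<and>
     (\<forall>f\<in>Ar C. \<forall>g\<in>Ar C. ccod C f = cdom C g \<longrightarrow>
         ccomp C g f \<in> hom C (cdom C f) (ccod C g)) \<and>
     (\<forall>f\<in>Ar C. ccomp C (cid C (ccod C f)) f = f \<and> ccomp C f (cid C (cdom C f)) = f) \<and>
     (\<forall>f\<in>Ar C. \<forall>g\<in>Ar C. \<forall>h\<in>Ar C. ccod C f = cdom C g \<longrightarrow> ccod C g = cdom C h \<longrightarrow>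
         ccomp C h (ccomp C g f) = ccomp C (ccomp C h g) f)"

definition is_sq :: "('o, 'a) cat \<Rightarrow> 'a \<Rightarrow> 'a \<Rightarrow> 'a \<Rightarrow> 'a \<Rightarrow> bool" where
  "is_sq C f g h k \<longleftrightarrow> f \<in> Ar C \<and> g \<in> Ar C \<and>
     h \<in> hom C (cdom C f) (cdom C g) \<and> k \<in> hom C (ccod C f) (ccod C g) \<and>
     ccomp C g h = ccomp C k f"

text \<open>fobj = E on objects of the arrow category, fmap f g h k = E(h,k) : Ef \<rightarrow> Eg
  for a square (h,k) : f \<rightarrow> g, flam = \<lambda>, frho = \<rho>.\<close>

record ('o, 'a) ffact =
  fobj :: "'a \<Rightarrow> 'o"
  fmap :: "'a \<Rightarrow> 'a \<Rightarrow> 'a \<Rightarrow> 'a \<Rightarrow> 'a"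
  flam :: "'a \<Rightarrow> 'a"
  frho :: "'a \<Rightarrow> 'a"

definition functorial_factorisation :: "('o, 'a) cat \<Rightarrow> ('o, 'a) ffact \<Rightarrow> bool" where
  "functorial_factorisation C F \<longleftrightarrow>
     (\<forall>f\<in>Ar C. fobj F f \<in> Ob C \<and>
        flam F f \<in> hom C (cdom C f) (fobj F f) \<and>
        frho F f \<in> hom C (fobj F f) (ccod C f) \<and>
        ccomp C (frho F f) (flam F f) = f \<and>
        fmap F f f (cid C (cdom C f)) (cid C (ccod C f)) = cid C (fobj F f)) \<and>
     (\<forall>f g h k. is_sq C f g h k \<longrightarrow>
        fmap F f g h k \<in> hom C (fobj F f) (fobj F g) \<and>
        ccomp C (fmap F f g h k) (flam F f) = ccomp C (flam F g) h \<and>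
        ccomp C k (frho F f) = ccomp C (frho F g) (fmap F f g h k)) \<and>
     (\<forall>f g g' h k h' k'. is_sq C f g h k \<longrightarrow> is_sq C g g' h' k' \<longrightarrow>
        fmap F f g' (ccomp C h' h) (ccomp C k' k) = ccomp C (fmap F g g' h' k') (fmap F f g h k))"

definition ff_mor :: "('o, 'a) cat \<Rightarrow> ('o, 'a) ffact \<Rightarrow> ('o, 'a) ffact \<Rightarrow> ('a \<Rightarrow> 'a) \<Rightarrow> bool" where
  "ff_mor C F G \<alpha> \<longleftrightarrow>
     (\<forall>f\<in>Ar C. \<alpha> f \<in> hom C (fobj F f) (fobj G f) \<and>
        ccomp C (\<alpha> f) (flam F f) = flam G f \<and>
        ccomp C (frho G f) (\<alpha> f) = frho F f) \<and>
     (\<forall>f g h k. is_sq C f g h k \<longrightarrow>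
        ccomp C (\<alpha> g) (fmap F f g h k) = ccomp C (fmap G f g h k) (\<alpha> f))"

definition meq :: "('o, 'a) cat \<Rightarrow> ('a \<Rightarrow> 'a) \<Rightarrow> ('a \<Rightarrow> 'a) \<Rightarrow> bool" where
  "meq C \<alpha> \<beta> \<longleftrightarrow> (\<forall>f\<in>Ar C. \<alpha> f = \<beta> f)"

definition vcomp :: "('o, 'a) cat \<Rightarrow> ('a \<Rightarrow> 'a) \<Rightarrow> ('a \<Rightarrow> 'a) \<Rightarrow> ('a \<Rightarrow> 'a)" where
  "vcomp C \<beta> \<alpha> = (\<lambda>f. ccomp C (\<beta> f) (\<alpha> f))"

definition idm :: "('o, 'a) cat \<Rightarrow> ('o, 'a) ffact \<Rightarrow> ('a \<Rightarrow> 'a)" where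
  "idm C F = (\<lambda>f. cid C (fobj F f))"

text \<open>otimes C F' F = F' \<otimes> F; odot C F' F = F' \<odot> F.\<close>

definition otimes :: "('o, 'a) cat \<Rightarrow> ('o, 'a) ffact \<Rightarrow> ('o, 'a) ffact \<Rightarrow> ('o, 'a) ffact" where
  "otimes C F' F =
     \<lparr> fobj = (\<lambda>f. fobj F' (frho F f)),
       fmap = (\<lambda>f g h k. fmap F' (frho F f) (frho F g) (fmap F f g h k) k),
       flam = (\<lambda>f. ccomp C (flam F' (frho F f)) (flam F f)),
       frho = (\<lambda>f. frho F' (frho F f)) \<rparr>"

definition odot :: "('o, 'a) cat \<Rightarrow> ('o, 'a) ffact \<Rightarrow> ('o, 'a) ffact \<Rightarrow> ('o, 'a) ffact" where
  "odot C F' F =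
     \<lparr> fobj = (\<lambda>f. fobj F' (flam F f)),
       fmap = (\<lambda>f g h k. fmap F' (flam F f) (flam F g) h (fmap F f g h k)),
       flam = (\<lambda>f. flam F' (flam F f)),
       frho = (\<lambda>f. ccomp C (frho F f) (frho F' (flam F f))) \<rparr>"

definition Iunit :: "('o, 'a) cat \<Rightarrow> ('o, 'a) ffact" where
  "Iunit C = \<lparr> fobj = cdom C, fmap = (\<lambda>f g h k. h), flam = (\<lambda>f. cid C (cdom C f)), frho = (\<lambda>f. f) \<rparr>"

definition Bunit :: "('o, 'a) cat \<Rightarrow> ('o, 'a) ffact" where
  "Bunit C = \<lparr> fobj = ccod C, fmap = (\<lambda>f g h k. k), flam = (\<lambda>f. f), frho = (\<lambda>f. cid C (ccod C f)) \<rparr>"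

definition otimes_mor :: "('o, 'a) cat \<Rightarrow> ('o, 'a) ffact \<Rightarrow> ('o, 'a) ffact \<Rightarrow> ('o, 'a) ffact
    \<Rightarrow> ('a \<Rightarrow> 'a) \<Rightarrow> ('a \<Rightarrow> 'a) \<Rightarrow> ('a \<Rightarrow> 'a)" where
  "otimes_mor C Fb F G \<beta> \<alpha> =
     (\<lambda>f. ccomp C (\<beta> (frho G f)) (fmap Fb (frho F f) (frho G f) (\<alpha> f) (cid C (ccod C f))))"

definition odot_mor :: "('o, 'a) cat \<Rightarrow> ('o, 'a) ffact \<Rightarrow> ('o, 'a) ffact \<Rightarrow> ('o, 'a) ffact
    \<Rightarrow> ('a \<Rightarrow> 'a) \<Rightarrow> ('a \<Rightarrow> 'a) \<Rightarrow> ('a \<Rightarrow> 'a)" where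
  "odot_mor C Fb F G \<beta> \<alpha> =
     (\<lambda>f. ccomp C (\<beta> (flam G f)) (fmap Fb (flam F f) (flam G f) (cid C (cdom C f)) (\<alpha> f)))"

text \<open>The unique maps m : \<bottom>\<otimes>\<bottom> \<rightarrow> \<bottom>, c : I \<rightarrow> I\<odot>I, j : I \<rightarrow> \<bottom> (their components are
  forced: identities resp. f itself).\<close>

definition m_map :: "('o, 'a) cat \<Rightarrow> ('a \<Rightarrow> 'a)" where
  "m_map C = (\<lambda>f. cid C (ccod C f))"

definition c_map :: "('o, 'a) cat \<Rightarrow> ('a \<Rightarrow> 'a)" where
  "c_map C = (\<lambda>f. cid C (cdom C f))"

definition j_map :: "('o, 'a) cat \<Rightarrow> ('a \<Rightarrow> 'a)" where
  "j_map C = (\<lambda>f. f)"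

text \<open>Interchange z_{A,B,C,D} : (A\<odot>B)\<otimes>(C\<odot>D) \<rightarrow> (A\<otimes>C)\<odot>(B\<otimes>D), with component
  E^1(E^3(1_X, \<lambda>^2_{\<rho>^4_f}), E^2(\<rho>^3_{\<lambda>^4_f}, 1_Y)).\<close>

definition z_map :: "('o, 'a) cat \<Rightarrow> ('o, 'a) ffact \<Rightarrow> ('o, 'a) ffact \<Rightarrow> ('o, 'a) ffact
    \<Rightarrow> ('o, 'a) ffact \<Rightarrow> ('a \<Rightarrow> 'a)" where
  "z_map C A B CC D =
     (\<lambda>f. let g = frho (odot C CC D) f;
              h = flam (otimes C B D) f
          in fmap A (flam B g) (frho CC h)
               (fmap CC (flam D f) h (cid C (cdom C f)) (flam B (frho D f)))
               (fmap B g (frho D f) (frho CC (flam D f)) (cid C (ccod C f))))"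

definition bialgebra :: "('o, 'a) cat \<Rightarrow> ('o, 'a) ffact \<Rightarrow>
    ('a \<Rightarrow> 'a) \<Rightarrow> ('a \<Rightarrow> 'a) \<Rightarrow> ('a \<Rightarrow> 'a) \<Rightarrow> ('a \<Rightarrow> 'a) \<Rightarrow> bool" where
  "bialgebra C A \<eta> \<mu> \<epsilon> \<Delta> \<longleftrightarrow>
     functorial_factorisation C A \<and>
     \<comment> \<open>(A, \<eta>, \<mu>) is a \<otimes>-monoid\<close>
     ff_mor C (Iunit C) A \<eta> \<and>
     ff_mor C (otimes C A A) A \<mu> \<and>
     meq C (vcomp C \<mu> (otimes_mor C (otimes C A A) A A \<mu> (idm C A)))
           (vcomp C \<mu> (otimes_mor C A (otimes C A A) A (idm C A) \<mu>)) \<and>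
     meq C (vcomp C \<mu> (otimes_mor C (Iunit C) A A \<eta> (idm C A))) (idm C A) \<and>
     meq C (vcomp C \<mu> (otimes_mor C A (Iunit C) A (idm C A) \<eta>)) (idm C A) \<and>
     \<comment> \<open>(A, \<epsilon>, \<Delta>) is a \<odot>-comonoid\<close>
     ff_mor C A (Bunit C) \<epsilon> \<and>
     ff_mor C A (odot C A A) \<Delta> \<and>
     meq C (vcomp C (odot_mor C A A (odot C A A) (idm C A) \<Delta>) \<Delta>)
           (vcomp C (odot_mor C A A A \<Delta> (idm C A)) \<Delta>) \<and>
     meq C (vcomp C (odot_mor C A A A \<epsilon> (idm C A)) \<Delta>) (idm C A) \<and>
     meq C (vcomp C (odot_mor C A A (Bunit C) (idm C A) \<epsilon>) \<Delta>) (idm C A) \<and>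
     \<comment> \<open>compatibility\<close>
     meq C (vcomp C \<Delta> \<eta>) (vcomp C (odot_mor C (Iunit C) (Iunit C) A \<eta> \<eta>) (c_map C)) \<and>
     meq C (vcomp C \<epsilon> \<mu>) (vcomp C (m_map C) (otimes_mor C A A (Bunit C) \<epsilon> \<epsilon>)) \<and>
     meq C (vcomp C \<epsilon> \<eta>) (j_map C) \<and>
     meq C (vcomp C \<Delta> \<mu>)
           (vcomp C (odot_mor C (otimes C A A) (otimes C A A) A \<mu> \<mu>)
              (vcomp C (z_map C A A A A) (otimes_mor C A A (odot C A A) \<Delta> \<Delta>)))"

definition nwfs :: "('o, 'a) cat \<Rightarrow> ('o, 'a) ffact \<Rightarrow> ('a \<Rightarrow> 'a) \<Rightarrow> ('a \<Rightarrow> 'a) \<Rightarrow> bool" where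
  "nwfs C F \<sigma> \<pi> \<longleftrightarrow>
     functorial_factorisation C F \<and>
     (\<forall>f\<in>Ar C.
        let E = fobj F; Em = fmap F; lm = flam F; rh = frho F; cmp = ccomp C;
            X = cdom C f; Y = ccod C f in
        \<sigma> f \<in> hom C (E f) (E (lm f)) \<and>
        \<pi> f \<in> hom C (E (rh f)) (E f) \<and>
        cmp (\<sigma> f) (lm f) = lm (lm f) \<and>
        cmp (rh f) (\<pi> f) = rh (rh f) \<and>
        cmp (rh (lm f)) (\<sigma> f) = cid C (E f) \<and>
        cmp (\<pi> f) (lm (rh f)) = cid C (E f) \<and>
        cmp (Em (lm f) f (cid C X) (rh f)) (\<sigma> f) = cid C (E f) \<and>
        cmp (\<pi> f) (Em f (rh f) (lm f) (cid C Y)) = cid C (E f) \<and>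
        cmp (Em (lm f) (lm (lm f)) (cid C X) (\<sigma> f)) (\<sigma> f) = cmp (\<sigma> (lm f)) (\<sigma> f) \<and>
        cmp (\<pi> f) (Em (rh (rh f)) (rh f) (\<pi> f) (cid C Y)) = cmp (\<pi> f) (\<pi> (rh f)) \<and>
        cmp (\<sigma> f) (\<pi> f) =
          cmp (\<pi> (lm f)) (cmp (Em (lm (rh f)) (rh (lm f)) (\<sigma> f) (\<pi> f)) (\<sigma> (rh f)))) \<and>
     \<comment> \<open>naturality of \<sigma> : E \<Rightarrow> E L and \<pi> : E R \<Rightarrow> E, with L(h,k) = (h, E(h,k)), R(h,k) = (E(h,k), k)\<close>
     (\<forall>f g h k. is_sq C f g h k \<longrightarrow>
        ccomp C (\<sigma> g) (fmap F f g h k) =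
          ccomp C (fmap F (flam F f) (flam F g) h (fmap F f g h k)) (\<sigma> f) \<and>
        ccomp C (\<pi> g) (fmap F (frho F f) (frho F g) (fmap F f g h k) k) =
          ccomp C (fmap F f g h k) (\<pi> f))"

text \<open>Families of arrows are taken extensional (undefined off the arrows of C), so that
  each structure has a unique representative.\<close>

definition nwfs_structs :: "('o, 'a) cat \<Rightarrow> ('o, 'a) ffact \<Rightarrow> (('a \<Rightarrow> 'a) \<times> ('a \<Rightarrow> 'a)) set" where
  "nwfs_structs C F = {(\<sigma>, \<pi>). \<sigma> \<in> extensional (Ar C) \<and> \<pi> \<in> extensional (Ar C) \<and> nwfs C F \<sigma> \<pi>}"

definition bialg_structs :: "('o, 'a) cat \<Rightarrow> ('o, 'a) ffact \<Rightarrow>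
    (('a \<Rightarrow> 'a) \<times> ('a \<Rightarrow> 'a) \<times> ('a \<Rightarrow> 'a) \<times> ('a \<Rightarrow> 'a)) set" where
  "bialg_structs C A = {(\<eta>, \<mu>, \<epsilon>, \<Delta>).
     \<eta> \<in> extensional (Ar C) \<and> \<mu> \<in> extensional (Ar C) \<and>
     \<epsilon> \<in> extensional (Ar C) \<and> \<Delta> \<in> extensional (Ar C) \<and> bialgebra C A \<eta> \<mu> \<epsilon> \<Delta>}"

end

theory Submission
  imports Defs
begin

(*
  Since I is initial and \<bottom> is terminal in Ff_C, the unit and counit of a bialgebra
  structure on (E, \<lambda>, \<rho>) are forced to be \<lambda> and \<rho>.  With these fixed, a
  \<otimes>-monoid multiplication \<pi> : E R \<Rightarrow> E is exactly a monad structure on R, and a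
  \<odot>-comonoid comultiplication \<sigma> : E \<Rightarrow> E L is exactly a comonad structure on L.
  Three of the four compatibility axioms then hold automatically.  The fourth, evaluated at f,
  collapses to the distributive law  \<sigma> f \<pi> f = \<pi> (\<lambda> f) E(\<sigma> f, \<pi> f) \<sigma> (\<rho> f):
  by functoriality of E the composites E(1, \<pi> f) E(1, \<lambda> (\<rho> f)) and
  E(\<rho> (\<lambda> f), 1) E(\<sigma> f, 1) inside the interchange map are identities, and naturality
  of \<sigma> moves the remaining factor past it.  Hence (\<sigma>, \<pi>) \<mapsto> (\<lambda>, \<pi>, \<rho>, \<sigma>) is the bijection.
*)

lemma hom_iff: "f \<in> hom C x y \<longleftrightarrow> f \<in> Ar C \<and> cdom C f = x \<and> ccod C f = y"
  unfolding hom_def by simp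

lemma is_sq_iff:
  "is_sq C f g h k \<longleftrightarrow> f \<in> Ar C \<and> g \<in> Ar C \<and> h \<in> Ar C \<and> k \<in> Ar C \<and>
     cdom C h = cdom C f \<and> ccod C h = cdom C g \<and> cdom C k = ccod C f \<and> ccod C k = ccod C g \<and>
     ccomp C g h = ccomp C k f"
  unfolding is_sq_def hom_def by auto

definition otimes_monoid :: "('o, 'a) cat \<Rightarrow> ('o, 'a) ffact \<Rightarrow> ('a \<Rightarrow> 'a) \<Rightarrow> ('a \<Rightarrow> 'a) \<Rightarrow> bool" where
  "otimes_monoid C A \<eta> \<mu> \<longleftrightarrow>
     ff_mor C (Iunit C) A \<eta> \<and>
     ff_mor C (otimes C A A) A \<mu> \<and>
     meq C (vcomp C \<mu> (otimes_mor C (otimes C A A) A A \<mu> (idm C A)))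
           (vcomp C \<mu> (otimes_mor C A (otimes C A A) A (idm C A) \<mu>)) \<and>
     meq C (vcomp C \<mu> (otimes_mor C (Iunit C) A A \<eta> (idm C A))) (idm C A) \<and>
     meq C (vcomp C \<mu> (otimes_mor C A (Iunit C) A (idm C A) \<eta>)) (idm C A)"

definition odot_comonoid :: "('o, 'a) cat \<Rightarrow> ('o, 'a) ffact \<Rightarrow> ('a \<Rightarrow> 'a) \<Rightarrow> ('a \<Rightarrow> 'a) \<Rightarrow> bool" where
  "odot_comonoid C A \<epsilon> \<Delta> \<longleftrightarrow>
     ff_mor C A (Bunit C) \<epsilon> \<and>
     ff_mor C A (odot C A A) \<Delta> \<and>
     meq C (vcomp C (odot_mor C A A (odot C A A) (idm C A) \<Delta>) \<Delta>)
           (vcomp C (odot_mor C A A A \<Delta> (idm C A)) \<Delta>) \<and>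
     meq C (vcomp C (odot_mor C A A A \<epsilon> (idm C A)) \<Delta>) (idm C A) \<and>
     meq C (vcomp C (odot_mor C A A (Bunit C) (idm C A) \<epsilon>) \<Delta>) (idm C A)"

definition bialgebra_compatible :: "('o, 'a) cat \<Rightarrow> ('o, 'a) ffact \<Rightarrow>
    ('a \<Rightarrow> 'a) \<Rightarrow> ('a \<Rightarrow> 'a) \<Rightarrow> ('a \<Rightarrow> 'a) \<Rightarrow> ('a \<Rightarrow> 'a) \<Rightarrow> bool" where
  "bialgebra_compatible C A \<eta> \<mu> \<epsilon> \<Delta> \<longleftrightarrow>
     meq C (vcomp C \<Delta> \<eta>) (vcomp C (odot_mor C (Iunit C) (Iunit C) A \<eta> \<eta>) (c_map C)) \<and>
     meq C (vcomp C \<epsilon> \<mu>) (vcomp C (m_map C) (otimes_mor C A A (Bunit C) \<epsilon> \<epsilon>)) \<and>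
     meq C (vcomp C \<epsilon> \<eta>) (j_map C) \<and>
     meq C (vcomp C \<Delta> \<mu>)
           (vcomp C (odot_mor C (otimes C A A) (otimes C A A) A \<mu> \<mu>)
              (vcomp C (z_map C A A A A) (otimes_mor C A A (odot C A A) \<Delta> \<Delta>)))"

lemma bialgebra_iff:
  "bialgebra C A \<eta> \<mu> \<epsilon> \<Delta> \<longleftrightarrow> functorial_factorisation C A \<and> otimes_monoid C A \<eta> \<mu> \<and>
     odot_comonoid C A \<epsilon> \<Delta> \<and> bialgebra_compatible C A \<eta> \<mu> \<epsilon> \<Delta>"
  unfolding bialgebra_def otimes_monoid_def odot_comonoid_def bialgebra_compatible_def by blast

locale ff_category =
  fixes C :: "('o, 'a) cat" and F :: "('o, 'a) ffact"
  assumes category: "category C" and functorial_factorisation: "functorial_factorisation C F"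
begin

abbreviation comp :: "'a \<Rightarrow> 'a \<Rightarrow> 'a" (infixr "\<cdot>" 55) where
  "g \<cdot> f \<equiv> ccomp C g f"

abbreviation "E \<equiv> fobj F"
abbreviation "Em \<equiv> fmap F"
abbreviation "lam \<equiv> flam F"
abbreviation "rho \<equiv> frho F"

lemma cdom_in_Ob [simp]: "f \<in> Ar C \<Longrightarrow> cdom C f \<in> Ob C"
  and ccod_in_Ob [simp]: "f \<in> Ar C \<Longrightarrow> ccod C f \<in> Ob C"
  and cid_in_Ar [simp]: "x \<in> Ob C \<Longrightarrow> cid C x \<in> Ar C"
  and cdom_cid [simp]: "x \<in> Ob C \<Longrightarrow> cdom C (cid C x) = x"
  and ccod_cid [simp]: "x \<in> Ob C \<Longrightarrow> ccod C (cid C x) = x"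
  using category unfolding category_def hom_def by blast+

lemma comp_in_Ar [simp]: "f \<in> Ar C \<Longrightarrow> g \<in> Ar C \<Longrightarrow> ccod C f = cdom C g \<Longrightarrow> g \<cdot> f \<in> Ar C"
  and cdom_comp [simp]: "f \<in> Ar C \<Longrightarrow> g \<in> Ar C \<Longrightarrow> ccod C f = cdom C g \<Longrightarrow> cdom C (g \<cdot> f) = cdom C f"
  and ccod_comp [simp]: "f \<in> Ar C \<Longrightarrow> g \<in> Ar C \<Longrightarrow> ccod C f = cdom C g \<Longrightarrow> ccod C (g \<cdot> f) = ccod C g"
  using category unfolding category_def hom_def by blast+

lemma comp_cid_left [simp]: "f \<in> Ar C \<Longrightarrow> ccod C f = y \<Longrightarrow> cid C y \<cdot> f = f"
  and comp_cid_right [simp]: "f \<in> Ar C \<Longrightarrow> cdom C f = x \<Longrightarrow> f \<cdot> cid C x = f"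
  using category unfolding category_def by blast+

lemma comp_assoc:
  "f \<in> Ar C \<Longrightarrow> g \<in> Ar C \<Longrightarrow> h \<in> Ar C \<Longrightarrow> ccod C f = cdom C g \<Longrightarrow> ccod C g = cdom C h \<Longrightarrow>
   h \<cdot> g \<cdot> f = (h \<cdot> g) \<cdot> f"
  using category unfolding category_def by blast

lemma fobj_in_Ob [simp]: "f \<in> Ar C \<Longrightarrow> E f \<in> Ob C"
  and lam_in_Ar [simp]: "f \<in> Ar C \<Longrightarrow> lam f \<in> Ar C"
  and cdom_lam [simp]: "f \<in> Ar C \<Longrightarrow> cdom C (lam f) = cdom C f"
  and ccod_lam [simp]: "f \<in> Ar C \<Longrightarrow> ccod C (lam f) = E f"
  and rho_in_Ar [simp]: "f \<in> Ar C \<Longrightarrow> rho f \<in> Ar C"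
  and cdom_rho [simp]: "f \<in> Ar C \<Longrightarrow> cdom C (rho f) = E f"
  and ccod_rho [simp]: "f \<in> Ar C \<Longrightarrow> ccod C (rho f) = ccod C f"
  and rho_lam [simp]: "f \<in> Ar C \<Longrightarrow> rho f \<cdot> lam f = f"
  using functorial_factorisation unfolding functorial_factorisation_def hom_def by blast+

lemma fmap_cid [simp]:
  "f \<in> Ar C \<Longrightarrow> cdom C f = x \<Longrightarrow> ccod C f = y \<Longrightarrow> Em f f (cid C x) (cid C y) = cid C (E f)"
  using functorial_factorisation unfolding functorial_factorisation_def by blast

lemma fmap_in_Ar: "is_sq C f g h k \<Longrightarrow> Em f g h k \<in> Ar C"
  and cdom_fmap: "is_sq C f g h k \<Longrightarrow> cdom C (Em f g h k) = E f"
  and ccod_fmap: "is_sq C f g h k \<Longrightarrow> ccod C (Em f g h k) = E g"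
  and lam_natural: "is_sq C f g h k \<Longrightarrow> Em f g h k \<cdot> lam f = lam g \<cdot> h"
  and rho_natural: "is_sq C f g h k \<Longrightarrow> k \<cdot> rho f = rho g \<cdot> Em f g h k"
  using functorial_factorisation unfolding functorial_factorisation_def hom_def by blast+

lemma fmap_comp:
  "is_sq C f g h k \<Longrightarrow> is_sq C g g' h' k' \<Longrightarrow> Em f g' (h' \<cdot> h) (k' \<cdot> k) = Em g g' h' k' \<cdot> Em f g h k"
  using functorial_factorisation unfolding functorial_factorisation_def by blast

lemmas fmap_typing = fmap_in_Ar cdom_fmap ccod_fmap

lemma is_sq_comp:
  assumes fg: "is_sq C f g h k" and gg': "is_sq C g g' h' k'"
  shows "is_sq C f g' (h' \<cdot> h) (k' \<cdot> k)"
proof -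
  have "g' \<cdot> h' \<cdot> h = (k' \<cdot> g) \<cdot> h"
    using fg gg' by (simp add: is_sq_iff comp_assoc)
  also have "\<dots> = k' \<cdot> k \<cdot> f"
    using fg gg' by (simp add: is_sq_iff comp_assoc[symmetric])
  also have "\<dots> = (k' \<cdot> k) \<cdot> f"
    using fg gg' by (simp add: is_sq_iff comp_assoc)
  finally show ?thesis using fg gg' by (simp add: is_sq_iff)
qed

lemma is_sq_lam: "is_sq C f g h k \<Longrightarrow> is_sq C (lam f) (lam g) h (Em f g h k)"
  by (simp add: is_sq_iff fmap_typing lam_natural)

lemma is_sq_rho: "is_sq C f g h k \<Longrightarrow> is_sq C (rho f) (rho g) (Em f g h k) k"
  by (simp add: is_sq_iff fmap_typing rho_natural[symmetric])

lemma fmap_comp_inverse: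
  assumes "is_sq C f g h k" and "is_sq C g f h' k'"
    and "h' \<cdot> h = cid C (cdom C f)" and "k' \<cdot> k = cid C (ccod C f)"
  shows "Em g f h' k' \<cdot> Em f g h k = cid C (E f)"
  using fmap_comp[OF assms(1,2)] assms by (simp add: is_sq_iff)

(* (1, \<sigma> f) : \<lambda> f \<rightarrow> \<lambda> (\<lambda> f) is the comultiplication of the comonad L over dom, whose
   counit is (1, \<rho> f) : \<lambda> f \<rightarrow> f; dually (\<pi> f, 1) is the multiplication of the monad R. *)
definition L_comonad :: "('a \<Rightarrow> 'a) \<Rightarrow> bool" where
  "L_comonad \<sigma> \<longleftrightarrow>
     (\<forall>f\<in>Ar C. \<sigma> f \<in> hom C (E f) (E (lam f)) \<and>
        \<sigma> f \<cdot> lam f = lam (lam f) \<and>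
        rho (lam f) \<cdot> \<sigma> f = cid C (E f) \<and>
        Em (lam f) f (cid C (cdom C f)) (rho f) \<cdot> \<sigma> f = cid C (E f) \<and>
        Em (lam f) (lam (lam f)) (cid C (cdom C f)) (\<sigma> f) \<cdot> \<sigma> f = \<sigma> (lam f) \<cdot> \<sigma> f) \<and>
     (\<forall>f g h k. is_sq C f g h k \<longrightarrow>
        \<sigma> g \<cdot> Em f g h k = Em (lam f) (lam g) h (Em f g h k) \<cdot> \<sigma> f)"

definition R_monad :: "('a \<Rightarrow> 'a) \<Rightarrow> bool" where
  "R_monad \<pi> \<longleftrightarrow>
     (\<forall>f\<in>Ar C. \<pi> f \<in> hom C (E (rho f)) (E f) \<and>
        rho f \<cdot> \<pi> f = rho (rho f) \<and>
        \<pi> f \<cdot> lam (rho f) = cid C (E f) \<and>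
        \<pi> f \<cdot> Em f (rho f) (lam f) (cid C (ccod C f)) = cid C (E f) \<and>
        \<pi> f \<cdot> Em (rho (rho f)) (rho f) (\<pi> f) (cid C (ccod C f)) = \<pi> f \<cdot> \<pi> (rho f)) \<and>
     (\<forall>f g h k. is_sq C f g h k \<longrightarrow>
        \<pi> g \<cdot> Em (rho f) (rho g) (Em f g h k) k = Em f g h k \<cdot> \<pi> f)"

definition distributive_law :: "('a \<Rightarrow> 'a) \<Rightarrow> ('a \<Rightarrow> 'a) \<Rightarrow> bool" where
  "distributive_law \<sigma> \<pi> \<longleftrightarrow>
     (\<forall>f\<in>Ar C. \<sigma> f \<cdot> \<pi> f = \<pi> (lam f) \<cdot> Em (lam (rho f)) (rho (lam f)) (\<sigma> f) (\<pi> f) \<cdot> \<sigma> (rho f))"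

lemma nwfs_iff: "nwfs C F \<sigma> \<pi> \<longleftrightarrow> L_comonad \<sigma> \<and> R_monad \<pi> \<and> distributive_law \<sigma> \<pi>"
  using functorial_factorisation
  unfolding nwfs_def L_comonad_def R_monad_def distributive_law_def Let_def by blast

lemma ff_mor_Iunit_iff: "ff_mor C (Iunit C) F \<eta> \<longleftrightarrow> (\<forall>f\<in>Ar C. \<eta> f = lam f)"
  using lam_natural by (auto simp: ff_mor_def Iunit_def hom_iff is_sq_iff)

lemma ff_mor_Bunit_iff: "ff_mor C F (Bunit C) \<epsilon> \<longleftrightarrow> (\<forall>f\<in>Ar C. \<epsilon> f = rho f)"
  using rho_natural by (auto simp: ff_mor_def Bunit_def hom_iff is_sq_iff)

lemma ff_mor_otimes_iff:
  "ff_mor C (otimes C F F) F \<mu> \<longleftrightarrow>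
     (\<forall>f\<in>Ar C. \<mu> f \<in> hom C (E (rho f)) (E f) \<and>
        \<mu> f \<cdot> lam (rho f) \<cdot> lam f = lam f \<and> rho f \<cdot> \<mu> f = rho (rho f)) \<and>
     (\<forall>f g h k. is_sq C f g h k \<longrightarrow>
        \<mu> g \<cdot> Em (rho f) (rho g) (Em f g h k) k = Em f g h k \<cdot> \<mu> f)"
  by (simp add: ff_mor_def otimes_def)

lemma ff_mor_odot_iff:
  "ff_mor C F (odot C F F) \<Delta> \<longleftrightarrow>
     (\<forall>f\<in>Ar C. \<Delta> f \<in> hom C (E f) (E (lam f)) \<and>
        \<Delta> f \<cdot> lam f = lam (lam f) \<and> (rho f \<cdot> rho (lam f)) \<cdot> \<Delta> f = rho f) \<and>
     (\<forall>f g h k. is_sq C f g h k \<longrightarrow>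
        \<Delta> g \<cdot> Em f g h k = Em (lam f) (lam g) h (Em f g h k) \<cdot> \<Delta> f)"
  by (simp add: ff_mor_def odot_def)

lemma otimes_unit_left_iff:
  assumes "\<forall>f\<in>Ar C. \<eta> f = lam f"
  shows "meq C (vcomp C \<mu> (otimes_mor C (Iunit C) F F \<eta> (idm C F))) (idm C F) \<longleftrightarrow>
    (\<forall>f\<in>Ar C. \<mu> f \<cdot> lam (rho f) = cid C (E f))"
  using assms by (simp add: meq_def vcomp_def otimes_mor_def Iunit_def idm_def)

lemma otimes_unit_right_iff:
  assumes "\<forall>f\<in>Ar C. \<eta> f = lam f"
  shows "meq C (vcomp C \<mu> (otimes_mor C F (Iunit C) F (idm C F) \<eta>)) (idm C F) \<longleftrightarrow>
    (\<forall>f\<in>Ar C. \<mu> f \<cdot> Em f (rho f) (lam f) (cid C (ccod C f)) = cid C (E f))"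
proof -
  have "is_sq C f (rho f) (lam f) (cid C (ccod C f))" if "f \<in> Ar C" for f
    using that by (simp add: is_sq_iff)
  then show ?thesis
    using assms by (simp add: meq_def vcomp_def otimes_mor_def Iunit_def idm_def fmap_typing)
qed

lemma otimes_assoc_iff:
  assumes \<mu>: "\<And>f. f \<in> Ar C \<Longrightarrow> \<mu> f \<in> hom C (E (rho f)) (E f)"
    and rho_\<mu>: "\<And>f. f \<in> Ar C \<Longrightarrow> rho f \<cdot> \<mu> f = rho (rho f)"
  shows "meq C (vcomp C \<mu> (otimes_mor C (otimes C F F) F F \<mu> (idm C F)))
      (vcomp C \<mu> (otimes_mor C F (otimes C F F) F (idm C F) \<mu>)) \<longleftrightarrow>
    (\<forall>f\<in>Ar C. \<mu> f \<cdot> Em (rho (rho f)) (rho f) (\<mu> f) (cid C (ccod C f)) = \<mu> f \<cdot> \<mu> (rho f))"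
proof -
  have "is_sq C (rho (rho f)) (rho f) (\<mu> f) (cid C (ccod C f))" if "f \<in> Ar C" for f
    using that \<mu> rho_\<mu> by (simp add: is_sq_iff hom_iff)
  then show ?thesis
    using \<mu> by (auto simp: meq_def vcomp_def otimes_mor_def otimes_def idm_def fmap_typing hom_iff)
qed

lemma odot_counit_left_iff:
  assumes "\<forall>f\<in>Ar C. \<epsilon> f = rho f"
  shows "meq C (vcomp C (odot_mor C F F F \<epsilon> (idm C F)) \<Delta>) (idm C F) \<longleftrightarrow>
    (\<forall>f\<in>Ar C. rho (lam f) \<cdot> \<Delta> f = cid C (E f))"
  using assms by (simp add: meq_def vcomp_def odot_mor_def idm_def)

lemma odot_counit_right_iff:
  assumes "\<forall>f\<in>Ar C. \<epsilon> f = rho f"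
  shows "meq C (vcomp C (odot_mor C F F (Bunit C) (idm C F) \<epsilon>) \<Delta>) (idm C F) \<longleftrightarrow>
    (\<forall>f\<in>Ar C. Em (lam f) f (cid C (cdom C f)) (rho f) \<cdot> \<Delta> f = cid C (E f))"
proof -
  have "is_sq C (lam f) f (cid C (cdom C f)) (rho f)" if "f \<in> Ar C" for f
    using that by (simp add: is_sq_iff)
  then show ?thesis
    using assms by (simp add: meq_def vcomp_def odot_mor_def Bunit_def idm_def fmap_typing)
qed

lemma odot_coassoc_iff:
  assumes \<Delta>: "\<And>f. f \<in> Ar C \<Longrightarrow> \<Delta> f \<in> hom C (E f) (E (lam f))"
    and \<Delta>_lam: "\<And>f. f \<in> Ar C \<Longrightarrow> \<Delta> f \<cdot> lam f = lam (lam f)"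
  shows "meq C (vcomp C (odot_mor C F F (odot C F F) (idm C F) \<Delta>) \<Delta>)
      (vcomp C (odot_mor C F F F \<Delta> (idm C F)) \<Delta>) \<longleftrightarrow>
    (\<forall>f\<in>Ar C. Em (lam f) (lam (lam f)) (cid C (cdom C f)) (\<Delta> f) \<cdot> \<Delta> f = \<Delta> (lam f) \<cdot> \<Delta> f)"
proof -
  have "is_sq C (lam f) (lam (lam f)) (cid C (cdom C f)) (\<Delta> f)" if "f \<in> Ar C" for f
    using that \<Delta> \<Delta>_lam by (simp add: is_sq_iff hom_iff)
  then show ?thesis
    using \<Delta> by (auto simp: meq_def vcomp_def odot_mor_def odot_def idm_def fmap_typing hom_iff)
qed

lemma otimes_monoid_iff_R_monad:
  "otimes_monoid C F \<eta> \<mu> \<longleftrightarrow> (\<forall>f\<in>Ar C. \<eta> f = lam f) \<and> R_monad \<mu>"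
proof (cases "(\<forall>f\<in>Ar C. \<eta> f = lam f) \<and>
    (\<forall>f\<in>Ar C. \<mu> f \<in> hom C (E (rho f)) (E f) \<and> rho f \<cdot> \<mu> f = rho (rho f))")
  case True
  then have \<eta>: "\<forall>f\<in>Ar C. \<eta> f = lam f"
    and \<mu>: "\<And>f. f \<in> Ar C \<Longrightarrow> \<mu> f \<in> hom C (E (rho f)) (E f)"
    and rho_\<mu>: "\<And>f. f \<in> Ar C \<Longrightarrow> rho f \<cdot> \<mu> f = rho (rho f)"
    by auto
  have "\<mu> f \<cdot> lam (rho f) \<cdot> lam f = lam f" if "f \<in> Ar C" "\<mu> f \<cdot> lam (rho f) = cid C (E f)" for f
    using that \<mu>[OF that(1)] by (simp add: comp_assoc hom_iff)
  then show ?thesis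
    using \<eta> \<mu> rho_\<mu>
    by (auto simp: otimes_monoid_def R_monad_def ff_mor_Iunit_iff otimes_unit_left_iff
        otimes_unit_right_iff otimes_assoc_iff ff_mor_otimes_iff)
next
  case False
  then show ?thesis
    by (auto simp: otimes_monoid_def R_monad_def ff_mor_Iunit_iff ff_mor_otimes_iff)
qed

lemma odot_comonoid_iff_L_comonad:
  "odot_comonoid C F \<epsilon> \<Delta> \<longleftrightarrow> (\<forall>f\<in>Ar C. \<epsilon> f = rho f) \<and> L_comonad \<Delta>"
proof (cases "(\<forall>f\<in>Ar C. \<epsilon> f = rho f) \<and>
    (\<forall>f\<in>Ar C. \<Delta> f \<in> hom C (E f) (E (lam f)) \<and> \<Delta> f \<cdot> lam f = lam (lam f))")
  case True
  then have \<epsilon>: "\<forall>f\<in>Ar C. \<epsilon> f = rho f"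
    and \<Delta>: "\<And>f. f \<in> Ar C \<Longrightarrow> \<Delta> f \<in> hom C (E f) (E (lam f))"
    and \<Delta>_lam: "\<And>f. f \<in> Ar C \<Longrightarrow> \<Delta> f \<cdot> lam f = lam (lam f)"
    by auto
  have "(rho f \<cdot> rho (lam f)) \<cdot> \<Delta> f = rho f" if "f \<in> Ar C" "rho (lam f) \<cdot> \<Delta> f = cid C (E f)" for f
    using that \<Delta>[OF that(1)] by (simp add: comp_assoc[symmetric] hom_iff)
  then show ?thesis
    using \<epsilon> \<Delta> \<Delta>_lam
    by (auto simp: odot_comonoid_def L_comonad_def ff_mor_Bunit_iff odot_counit_left_iff
        odot_counit_right_iff odot_coassoc_iff ff_mor_odot_iff)
next
  case False
  then show ?thesis
    by (auto simp: odot_comonoid_def L_comonad_def ff_mor_Bunit_iff ff_mor_odot_iff)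
qed

lemma interchange_composite_unfold:
  "vcomp C (odot_mor C (otimes C F F) (otimes C F F) F \<pi> \<pi>)
      (vcomp C (z_map C F F F F) (otimes_mor C F F (odot C F F) \<sigma> \<sigma>)) f =
    (let X = cdom C f; Y = ccod C f; g = rho f \<cdot> rho (lam f); h = lam (rho f) \<cdot> lam f in
     (\<pi> (lam f) \<cdot> Em (rho h) (rho (lam f)) (Em h (lam f) (cid C X) (\<pi> f)) (\<pi> f)) \<cdot>
     Em (lam g) (rho h) (Em (lam f) h (cid C X) (lam (rho f))) (Em g (rho f) (rho (lam f)) (cid C Y)) \<cdot>
     \<sigma> g \<cdot> Em (rho f) g (\<sigma> f) (cid C Y))"
  by (simp add: vcomp_def odot_mor_def otimes_mor_def z_map_def otimes_def odot_def Let_def)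

lemma is_sq_lam_otimes:
  "f \<in> Ar C \<Longrightarrow> is_sq C (lam f) (lam (rho f) \<cdot> lam f) (cid C (cdom C f)) (lam (rho f))"
  by (simp add: is_sq_iff)

lemma is_sq_rho_odot:
  "f \<in> Ar C \<Longrightarrow> is_sq C (rho f \<cdot> rho (lam f)) (rho f) (rho (lam f)) (cid C (ccod C f))"
  by (simp add: is_sq_iff)

lemma is_sq_lam_otimes_retraction:
  assumes "f \<in> Ar C" and "\<pi> \<in> hom C (E (rho f)) (E f)" and "\<pi> \<cdot> lam (rho f) = cid C (E f)"
  shows "is_sq C (lam (rho f) \<cdot> lam f) (lam f) (cid C (cdom C f)) \<pi>"
  using assms by (simp add: is_sq_iff hom_iff comp_assoc)

lemma is_sq_rho_odot_section:
  assumes "f \<in> Ar C" and "\<sigma> \<in> hom C (E f) (E (lam f))" and "rho (lam f) \<cdot> \<sigma> = cid C (E f)"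
  shows "is_sq C (rho f) (rho f \<cdot> rho (lam f)) \<sigma> (cid C (ccod C f))"
  using assms by (simp add: is_sq_iff hom_iff comp_assoc[symmetric])

lemma is_sq_interchange:
  assumes f: "f \<in> Ar C"
  shows "is_sq C (lam (rho f \<cdot> rho (lam f))) (rho (lam (rho f) \<cdot> lam f))
    (Em (lam f) (lam (rho f) \<cdot> lam f) (cid C (cdom C f)) (lam (rho f)))
    (Em (rho f \<cdot> rho (lam f)) (rho f) (rho (lam f)) (cid C (ccod C f)))"
  using rho_natural[OF is_sq_lam_otimes[OF f]] lam_natural[OF is_sq_rho_odot[OF f]]
    fmap_typing[OF is_sq_lam_otimes[OF f]] fmap_typing[OF is_sq_rho_odot[OF f]] f
  by (simp add: is_sq_iff)

lemma interchange_composite_eq: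
  assumes f: "f \<in> Ar C"
    and \<sigma>: "\<And>x. x \<in> Ar C \<Longrightarrow> \<sigma> x \<in> hom C (E x) (E (lam x))"
    and \<pi>: "\<And>x. x \<in> Ar C \<Longrightarrow> \<pi> x \<in> hom C (E (rho x)) (E x)"
    and counit: "rho (lam f) \<cdot> \<sigma> f = cid C (E f)"
    and unit: "\<pi> f \<cdot> lam (rho f) = cid C (E f)"
    and \<sigma>_natural: "\<And>f g h k. is_sq C f g h k \<Longrightarrow>
      \<sigma> g \<cdot> Em f g h k = Em (lam f) (lam g) h (Em f g h k) \<cdot> \<sigma> f"
  shows "vcomp C (odot_mor C (otimes C F F) (otimes C F F) F \<pi> \<pi>)
      (vcomp C (z_map C F F F F) (otimes_mor C F F (odot C F F) \<sigma> \<sigma>)) f =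
    \<pi> (lam f) \<cdot> Em (lam (rho f)) (rho (lam f)) (\<sigma> f) (\<pi> f) \<cdot> \<sigma> (rho f)"
proof -
  define g h where "g = rho f \<cdot> rho (lam f)" and "h = lam (rho f) \<cdot> lam f"
  define a e b d where "a = Em (lam f) h (cid C (cdom C f)) (lam (rho f))"
    and "e = Em h (lam f) (cid C (cdom C f)) (\<pi> f)"
    and "b = Em g (rho f) (rho (lam f)) (cid C (ccod C f))"
    and "d = Em (rho f) g (\<sigma> f) (cid C (ccod C f))"
  note sq_lam = is_sq_lam_otimes[OF f, folded h_def]
    and sq_rho = is_sq_rho_odot[OF f, folded g_def]
    and sq_\<pi> = is_sq_lam_otimes_retraction[OF f \<pi>[OF f] unit, folded h_def]
    and sq_\<sigma> = is_sq_rho_odot_section[OF f \<sigma>[OF f] counit, folded g_def]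
  have sq_ab: "is_sq C (lam g) (rho h) a b"
    unfolding a_def b_def g_def h_def by (rule is_sq_interchange[OF f])
  have sq_e\<pi>: "is_sq C (rho h) (rho (lam f)) e (\<pi> f)"
    unfolding e_def by (rule is_sq_rho[OF sq_\<pi>])
  have sq_\<sigma>d: "is_sq C (lam (rho f)) (lam g) (\<sigma> f) d"
    unfolding d_def by (rule is_sq_lam[OF sq_\<sigma>])
  have ea: "e \<cdot> a = cid C (E (lam f))"
    unfolding a_def e_def using sq_lam sq_\<pi> f unit by (intro fmap_comp_inverse) simp_all
  have bd: "b \<cdot> d = cid C (E (rho f))"
    unfolding b_def d_def using sq_\<sigma> sq_rho f counit by (intro fmap_comp_inverse) simp_all
  have key: "Em (rho h) (rho (lam f)) e (\<pi> f) \<cdot> Em (lam g) (rho h) a b \<cdot> Em (lam (rho f)) (lam g) (\<sigma> f) d =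
      Em (lam (rho f)) (rho (lam f)) (\<sigma> f) (\<pi> f)"
    unfolding fmap_comp[OF sq_\<sigma>d sq_ab, symmetric]
      fmap_comp[OF is_sq_comp[OF sq_\<sigma>d sq_ab] sq_e\<pi>, symmetric]
    using sq_ab sq_e\<pi> sq_\<sigma>d f \<sigma>[OF f] \<pi>[OF f] by (simp add: comp_assoc ea bd is_sq_iff hom_iff)
  have "vcomp C (odot_mor C (otimes C F F) (otimes C F F) F \<pi> \<pi>)
      (vcomp C (z_map C F F F F) (otimes_mor C F F (odot C F F) \<sigma> \<sigma>)) f =
    (\<pi> (lam f) \<cdot> Em (rho h) (rho (lam f)) e (\<pi> f)) \<cdot> Em (lam g) (rho h) a b \<cdot> \<sigma> g \<cdot> d"
    unfolding interchange_composite_unfold a_def b_def e_def d_def g_def h_def Let_def ..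
  also have "\<dots> = (\<pi> (lam f) \<cdot> Em (rho h) (rho (lam f)) e (\<pi> f)) \<cdot> Em (lam g) (rho h) a b \<cdot>
      Em (lam (rho f)) (lam g) (\<sigma> f) d \<cdot> \<sigma> (rho f)"
    unfolding d_def using \<sigma>_natural[OF sq_\<sigma>] by simp
  also have "\<dots> = \<pi> (lam f) \<cdot> (Em (rho h) (rho (lam f)) e (\<pi> f) \<cdot> Em (lam g) (rho h) a b \<cdot>
      Em (lam (rho f)) (lam g) (\<sigma> f) d) \<cdot> \<sigma> (rho f)"
    using f \<sigma>[of "rho f"] \<pi>[of "lam f"] sq_ab sq_e\<pi> sq_\<sigma>d
    by (simp add: comp_assoc fmap_typing hom_iff)
  finally show ?thesis unfolding key .
qed

lemma otimes_counit_component: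
  assumes f: "f \<in> Ar C" and \<epsilon>: "\<forall>f\<in>Ar C. \<epsilon> f = rho f"
  shows "m_map C f \<cdot> otimes_mor C F F (Bunit C) \<epsilon> \<epsilon> f = rho (rho f)"
proof -
  have sq: "is_sq C (rho f) (cid C (ccod C f)) (rho f) (cid C (ccod C f))"
    using f by (simp add: is_sq_iff)
  show ?thesis
    using rho_natural[OF sq] fmap_typing[OF sq] f \<epsilon>
    by (simp add: otimes_mor_def Bunit_def m_map_def)
qed

lemma bialgebra_compatible_iff_distributive_law:
  assumes \<eta>: "\<forall>f\<in>Ar C. \<eta> f = lam f" and \<epsilon>: "\<forall>f\<in>Ar C. \<epsilon> f = rho f"
    and L: "L_comonad \<Delta>" and R: "R_monad \<mu>"
  shows "bialgebra_compatible C F \<eta> \<mu> \<epsilon> \<Delta> \<longleftrightarrow> distributive_law \<Delta> \<mu>"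
proof -
  have \<Delta>: "\<And>f. f \<in> Ar C \<Longrightarrow> \<Delta> f \<in> hom C (E f) (E (lam f))"
    and \<Delta>_lam: "\<And>f. f \<in> Ar C \<Longrightarrow> \<Delta> f \<cdot> lam f = lam (lam f)"
    and counit: "\<And>f. f \<in> Ar C \<Longrightarrow> rho (lam f) \<cdot> \<Delta> f = cid C (E f)"
    and \<Delta>_natural: "\<And>f g h k. is_sq C f g h k \<Longrightarrow>
      \<Delta> g \<cdot> Em f g h k = Em (lam f) (lam g) h (Em f g h k) \<cdot> \<Delta> f"
    using L unfolding L_comonad_def by blast+
  have \<mu>: "\<And>f. f \<in> Ar C \<Longrightarrow> \<mu> f \<in> hom C (E (rho f)) (E f)"
    and rho_\<mu>: "\<And>f. f \<in> Ar C \<Longrightarrow> rho f \<cdot> \<mu> f = rho (rho f)"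
    and unit: "\<And>f. f \<in> Ar C \<Longrightarrow> \<mu> f \<cdot> lam (rho f) = cid C (E f)"
    using R unfolding R_monad_def by blast+
  have "meq C (vcomp C \<Delta> \<eta>) (vcomp C (odot_mor C (Iunit C) (Iunit C) F \<eta> \<eta>) (c_map C))"
    using \<eta> \<Delta>_lam by (simp add: meq_def vcomp_def odot_mor_def Iunit_def c_map_def)
  moreover have "meq C (vcomp C \<epsilon> \<mu>) (vcomp C (m_map C) (otimes_mor C F F (Bunit C) \<epsilon> \<epsilon>))"
    using \<epsilon> rho_\<mu> by (simp add: meq_def vcomp_def otimes_counit_component)
  moreover have "meq C (vcomp C \<epsilon> \<eta>) (j_map C)"
    using \<eta> \<epsilon> by (simp add: meq_def vcomp_def j_map_def)
  moreover have "meq C (vcomp C \<Delta> \<mu>)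
      (vcomp C (odot_mor C (otimes C F F) (otimes C F F) F \<mu> \<mu>)
        (vcomp C (z_map C F F F F) (otimes_mor C F F (odot C F F) \<Delta> \<Delta>))) \<longleftrightarrow>
    distributive_law \<Delta> \<mu>"
    using interchange_composite_eq[OF _ \<Delta> \<mu> counit unit \<Delta>_natural]
    by (simp add: meq_def vcomp_def distributive_law_def)
  ultimately show ?thesis
    unfolding bialgebra_compatible_def by blast
qed

lemma bialgebra_iff_nwfs:
  "bialgebra C F \<eta> \<mu> \<epsilon> \<Delta> \<longleftrightarrow>
    (\<forall>f\<in>Ar C. \<eta> f = lam f) \<and> (\<forall>f\<in>Ar C. \<epsilon> f = rho f) \<and> nwfs C F \<Delta> \<mu>"
  using bialgebra_compatible_iff_distributive_law functorial_factorisation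
  by (auto simp: bialgebra_iff otimes_monoid_iff_R_monad odot_comonoid_iff_L_comonad nwfs_iff)

end

theorem proposition3p7:
  fixes C :: "('o, 'a) cat" and F :: "('o, 'a) ffact"
  assumes "category C"
    and "functorial_factorisation C F"
  shows "\<exists>\<Phi>. bij_betw \<Phi> (nwfs_structs C F) (bialg_structs C F)"
proof -
  interpret ff_category C F
    using assms by unfold_locales
  let ?\<Phi> = "\<lambda>(\<sigma>, \<pi>). (restrict lam (Ar C), \<pi>, restrict rho (Ar C), \<sigma>)"
  have "bij_betw ?\<Phi> (nwfs_structs C F) (bialg_structs C F)"
  proof (rule bij_betw_byWitness[where f' = "\<lambda>(\<eta>, \<mu>, \<epsilon>, \<Delta>). (\<Delta>, \<mu>)"])
    show "\<forall>s\<in>nwfs_structs C F. (\<lambda>(\<eta>, \<mu>, \<epsilon>, \<Delta>). (\<Delta>, \<mu>)) (?\<Phi> s) = s"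
      by auto
    show "\<forall>b\<in>bialg_structs C F. ?\<Phi> ((\<lambda>(\<eta>, \<mu>, \<epsilon>, \<Delta>). (\<Delta>, \<mu>)) b) = b"
      by (auto simp: bialg_structs_def bialgebra_iff_nwfs intro!: extensionalityI[where A = "Ar C"])
    show "?\<Phi> ` nwfs_structs C F \<subseteq> bialg_structs C F"
      by (auto simp: nwfs_structs_def bialg_structs_def bialgebra_iff_nwfs)
    show "(\<lambda>(\<eta>, \<mu>, \<epsilon>, \<Delta>). (\<Delta>, \<mu>)) ` bialg_structs C F \<subseteq> nwfs_structs C F"
      by (auto simp: nwfs_structs_def bialg_structs_def bialgebra_iff_nwfs)
  qed
  then show ?thesis by blast
qed

end
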